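(* Let $X$ be a special (abstract) rank one group with abelian unipotent subgroups $A$ and $B$, and set $H = N_X(A) \cap N_X(B)$. If $|A| \geq 4$, then $A = [A,H]$.
   Context: For a group $X$ and $g,x \in X$, write $x^g = g^{-1}xg$, $A^g = g^{-1}Ag$, and $[x,g] = x^{-1}g^{-1}xg$; $[A,H]$ denotes the subgroup generated by all $[a,h]$ with $a \in A$, $h \in H$. A group $X$ is an (abstract) rank one group with abelian unipotent subgroups $A$ and $B$ if $X = \langle A, B\rangle$ where $A$ and $B$ are different abelian subgroups of $X$ such that for each $1 \neq a \in A$ there is an element $1 \neq b \in B$ with $A^b = B^a$, and for each $1 \neq b \in B$ there is an element $1 \neq a \in A$ with $B^a = A^b$. In such a group, for each $1 \neq a \in A$ the element $1 \neq b \in B$ with $A^b = B^a$ is uniquely determined and is denoted $b(a)$. The group $X$ is called special if $b(a^{-1}) = b(a)^{-1}$ for all $1 \neq a \in A$. *)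

theory Defs
  imports "HOL-Algebra.Group_Action" "HOL-Algebra.Generated_Groups"
begin

text \<open>Conjugation conventions of the paper: x^g = g^-1 x g, A^g = g^-1 A g,
  [x,g] = x^-1 g^-1 x g.\<close>

definition conj_set :: "('a, 'b) monoid_scheme \<Rightarrow> 'a set \<Rightarrow> 'a \<Rightarrow> 'a set" where
  "conj_set G A g = (\<lambda>a. inv\<^bsub>G\<^esub> g \<otimes>\<^bsub>G\<^esub> a \<otimes>\<^bsub>G\<^esub> g) ` A"

definition comm_elem :: "('a, 'b) monoid_scheme \<Rightarrow> 'a \<Rightarrow> 'a \<Rightarrow> 'a" where
  "comm_elem G x g = inv\<^bsub>G\<^esub> x \<otimes>\<^bsub>G\<^esub> inv\<^bsub>G\<^esub> g \<otimes>\<^bsub>G\<^esub> x \<otimes>\<^bsub>G\<^esub> g"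

definition comm_subgroup :: "('a, 'b) monoid_scheme \<Rightarrow> 'a set \<Rightarrow> 'a set \<Rightarrow> 'a set" where
  "comm_subgroup G A H = generate G {comm_elem G a h | a h. a \<in> A \<and> h \<in> H}"

definition abelian_subgroup :: "('a, 'b) monoid_scheme \<Rightarrow> 'a set \<Rightarrow> bool" where
  "abelian_subgroup G A \<longleftrightarrow> subgroup A G \<and>
     (\<forall>x\<in>A. \<forall>y\<in>A. x \<otimes>\<^bsub>G\<^esub> y = y \<otimes>\<^bsub>G\<^esub> x)"

definition rank_one_group :: "('a, 'b) monoid_scheme \<Rightarrow> 'a set \<Rightarrow> 'a set \<Rightarrow> bool" where
  "rank_one_group G A B \<longleftrightarrow> group G \<and>
     abelian_subgroup G A \<and> abelian_subgroup G B \<and> A \<noteq> B \<and>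
     generate G (A \<union> B) = carrier G \<and>
     (\<forall>a\<in>A - {\<one>\<^bsub>G\<^esub>}. \<exists>b\<in>B - {\<one>\<^bsub>G\<^esub>}. conj_set G A b = conj_set G B a) \<and>
     (\<forall>b\<in>B - {\<one>\<^bsub>G\<^esub>}. \<exists>a\<in>A - {\<one>\<^bsub>G\<^esub>}. conj_set G B a = conj_set G A b)"

definition b_of :: "('a, 'b) monoid_scheme \<Rightarrow> 'a set \<Rightarrow> 'a set \<Rightarrow> 'a \<Rightarrow> 'a" where
  "b_of G A B a = (THE b. b \<in> B - {\<one>\<^bsub>G\<^esub>} \<and> conj_set G A b = conj_set G B a)"

definition special_rank_one_group :: "('a, 'b) monoid_scheme \<Rightarrow> 'a set \<Rightarrow> 'a set \<Rightarrow> bool" where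
  "special_rank_one_group G A B \<longleftrightarrow> rank_one_group G A B \<and>
     (\<forall>a\<in>A - {\<one>\<^bsub>G\<^esub>}. b_of G A B (inv\<^bsub>G\<^esub> a) = inv\<^bsub>G\<^esub> (b_of G A B a))"

end

theory Submission
  imports Defs
begin

text \<open>
  Let X be a special rank one group with unipotent subgroups A and B, let
  H = N(A) \<inter> N(B) (the torus) and K = [A,H] \<subseteq> A.  For x, y \<in> A write x \<equiv> y
  if x^-1 y \<in> K; since A is abelian this is a congruence on A.

  (1) Rank one: no 1 \<noteq> a \<in> A normalizes B and no 1 \<noteq> b \<in> B normalizes A.
      Hence b(a) is unique, and a h b = 1 with a \<in> A, h \<in> H, b \<in> B forces a = b = 1.
  (2) Specialness gives the braid relation a b^-1 a = b^-1 a b^-1 for b = b(a),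
      so n(a) = a b(a)^-1 a interchanges A and B and n(a)^-1 a n(a) = a^-1 n(a) a^-1.
  (3) Consequently, for every N interchanging A and B and 1 \<noteq> x \<in> A,
      N^-1 x N = x'^-1 h N x'^-1 with x' \<equiv> x and h \<in> H.
  (4) Key lemma: if c, d, cd \<noteq> 1 then c d^2, c^2 d \<in> K.  Expanding N = n(cd) with
      (2) and (3) gives N = a1 h N a2 with a1 \<equiv> c d^2, a2 \<equiv> c^2 d, and (1) yields
      a1 = a2 = 1.
  (5) If w, tw, tw^2 \<noteq> 1, then t \<in> K by (4); when |A| \<ge> 4 every element of A
      admits such a w (possibly after passing to its inverse or to a square root).
\<close>

context group
begin

lemma mult_inv_cancel_left [simp]: "x \<in> carrier G \<Longrightarrow> y \<in> carrier G \<Longrightarrow> x \<otimes> (inv x \<otimes> y) = y"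
  by (simp add: m_assoc[symmetric])

lemma inv_mult_cancel_left [simp]: "x \<in> carrier G \<Longrightarrow> y \<in> carrier G \<Longrightarrow> inv x \<otimes> (x \<otimes> y) = y"
  by (simp add: m_assoc[symmetric])

lemma conj_set_closed: "S \<subseteq> carrier G \<Longrightarrow> g \<in> carrier G \<Longrightarrow> conj_set G S g \<subseteq> carrier G"
  unfolding conj_set_def by auto

lemma conj_set_memI: "x \<in> S \<Longrightarrow> inv g \<otimes> x \<otimes> g \<in> conj_set G S g"
  unfolding conj_set_def by auto

lemma conj_set_mult:
  "S \<subseteq> carrier G \<Longrightarrow> g \<in> carrier G \<Longrightarrow> h \<in> carrier G \<Longrightarrow>
   conj_set G S (g \<otimes> h) = conj_set G (conj_set G S g) h"
  unfolding conj_set_def image_image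
  by (intro image_cong refl) (auto simp: inv_mult_group m_assoc subsetD)

lemma conj_set_one: "S \<subseteq> carrier G \<Longrightarrow> conj_set G S \<one> = S"
  unfolding conj_set_def by (auto simp: subsetD)

lemma conj_set_inv:
  "S \<subseteq> carrier G \<Longrightarrow> g \<in> carrier G \<Longrightarrow> conj_set G S g = T \<Longrightarrow> conj_set G T (inv g) = S"
  using conj_set_mult[of S g "inv g"] conj_set_one by auto

lemma conj_set_subgroup: assumes "subgroup S G" "a \<in> S" shows "conj_set G S a = S"
proof -
  interpret subgroup S G by fact
  show ?thesis
  proof
    show "conj_set G S a \<subseteq> S" unfolding conj_set_def using assms(2) by auto
    show "S \<subseteq> conj_set G S a"
    proof
      fix x assume x: "x \<in> S"
      have "x = inv a \<otimes> (a \<otimes> x \<otimes> inv a) \<otimes> a"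
        using x assms(2) by (simp add: m_assoc)
      moreover have "a \<otimes> x \<otimes> inv a \<in> S" using x assms(2) by auto
      ultimately show "x \<in> conj_set G S a" unfolding conj_set_def by blast
    qed
  qed
qed

lemma normalizer_iff:
  assumes S: "S \<subseteq> carrier G"
  shows "g \<in> normalizer G S \<longleftrightarrow> g \<in> carrier G \<and> conj_set G S g = S"
proof -
  have "g <# S #> inv g = conj_set G S (inv g)" if "g \<in> carrier G"
    unfolding l_coset_def r_coset_def conj_set_def image_image using that by auto
  moreover have "conj_set G S (inv g) = S \<longleftrightarrow> conj_set G S g = S" if "g \<in> carrier G"
    using conj_set_inv[OF S, of g S] conj_set_inv[OF S, of "inv g" S] that by auto
  ultimately show ?thesis unfolding normalizer_def stabilizer_def using S by auto
qed

lemma conj_relation_transfer: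
  assumes "N \<in> carrier G" "m \<in> carrier G" "x \<in> carrier G"
    and rel: "inv m \<otimes> x \<otimes> m = inv x \<otimes> m \<otimes> inv x"
  defines "y \<equiv> inv (inv m \<otimes> N) \<otimes> x \<otimes> (inv m \<otimes> N)"
  shows "inv N \<otimes> x \<otimes> N = inv y \<otimes> (inv N \<otimes> m) \<otimes> N \<otimes> inv y"
proof -
  have rel': "inv x \<otimes> (m \<otimes> (inv x \<otimes> z)) = inv m \<otimes> (x \<otimes> (m \<otimes> z))" if z: "z \<in> carrier G" for z
  proof -
    have "(inv x \<otimes> m \<otimes> inv x) \<otimes> z = (inv m \<otimes> x \<otimes> m) \<otimes> z" using rel by simp
    thus ?thesis using assms(1-3) z by (simp add: m_assoc)
  qed
  show ?thesis using assms(1-3) unfolding y_def by (simp add: inv_mult_group m_assoc rel')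
qed

end

lemma exists_outside_three:
  assumes "infinite S \<or> card S \<ge> 4"
  shows "\<exists>w\<in>S. w \<notin> {p, q, r}"
proof (rule ccontr)
  assume "\<not> ?thesis"
  then have sub: "S \<subseteq> {p, q, r}" by blast
  then have "finite S" using finite_subset by blast
  then have "card S \<ge> 4" using assms by simp
  moreover have "card S \<le> card {p, q, r}" using card_mono[OF _ sub] by simp
  moreover have "card {p, q, r} \<le> 3" by (simp add: card_insert_if)
  ultimately show False by simp
qed

locale special_rank_one = group G for G (structure) +
  fixes A B :: "'a set"
  assumes special_rank_one: "special_rank_one_group G A B"
begin

lemma
  shows A_subgroup: "subgroup A G" and B_subgroup: "subgroup B G"
    and A_comm: "\<And>x y. x \<in> A \<Longrightarrow> y \<in> A \<Longrightarrow> x \<otimes> y = y \<otimes> x"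
    and A_neq_B: "A \<noteq> B"
    and partner_exists: "\<And>a. a \<in> A - {\<one>} \<Longrightarrow> \<exists>b\<in>B - {\<one>}. conj_set G A b = conj_set G B a"
    and partner_exists_B: "\<And>b. b \<in> B - {\<one>} \<Longrightarrow> \<exists>a\<in>A - {\<one>}. conj_set G B a = conj_set G A b"
    and partner_inv: "\<And>a. a \<in> A - {\<one>} \<Longrightarrow> b_of G A B (inv a) = inv (b_of G A B a)"
  using special_rank_one
  unfolding special_rank_one_group_def rank_one_group_def abelian_subgroup_def by auto

lemma A_subset: "A \<subseteq> carrier G" and B_subset: "B \<subseteq> carrier G"
  using A_subgroup B_subgroup subgroup.subset by blast+

lemma A_carrier [simp]: "x \<in> A \<Longrightarrow> x \<in> carrier G" and B_carrier [simp]: "x \<in> B \<Longrightarrow> x \<in> carrier G"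
  using A_subset B_subset by blast+

lemma A_closed [simp]: "x \<in> A \<Longrightarrow> y \<in> A \<Longrightarrow> x \<otimes> y \<in> A" "x \<in> A \<Longrightarrow> inv x \<in> A" "\<one> \<in> A"
  by (simp_all add: subgroup.m_closed[OF A_subgroup] subgroup.m_inv_closed[OF A_subgroup]
      subgroup.one_closed[OF A_subgroup])

lemma B_closed [simp]: "x \<in> B \<Longrightarrow> y \<in> B \<Longrightarrow> x \<otimes> y \<in> B" "x \<in> B \<Longrightarrow> inv x \<in> B" "\<one> \<in> B"
  by (simp_all add: subgroup.m_closed[OF B_subgroup] subgroup.m_inv_closed[OF B_subgroup]
      subgroup.one_closed[OF B_subgroup])

text \<open>Rank one: A \<inter> N(B) = 1 and B \<inter> N(A) = 1, because a nontrivial element of either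
  subgroup conjugates the other one onto a conjugate of itself, never onto itself.\<close>

lemma B_normalizing_A_trivial: assumes "b \<in> B" "conj_set G A b = A" shows "b = \<one>"
proof (rule ccontr)
  assume "b \<noteq> \<one>"
  then obtain a where a: "a \<in> A" "conj_set G B a = A" using partner_exists_B assms by fastforce
  then have "conj_set G A (inv a) = B" using conj_set_inv[OF B_subset] by simp
  moreover have "conj_set G A (inv a) = A" using conj_set_subgroup[OF A_subgroup] a by simp
  ultimately show False using A_neq_B by simp
qed

lemma A_normalizing_B_trivial: assumes "a \<in> A" "conj_set G B a = B" shows "a = \<one>"
proof (rule ccontr)
  assume "a \<noteq> \<one>"
  then obtain b where b: "b \<in> B" "conj_set G A b = B" using partner_exists assms by fastforce
  then have "conj_set G B (inv b) = A" using conj_set_inv[OF A_subset] by simp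
  moreover have "conj_set G B (inv b) = B" using conj_set_subgroup[OF B_subgroup] b by simp
  ultimately show False using A_neq_B by simp
qed

text \<open>Uniqueness of b(a): two solutions differ by an element of B normalizing A.\<close>

lemma partner_unique:
  assumes "b \<in> B" "b' \<in> B" "conj_set G A b = conj_set G B a" "conj_set G A b' = conj_set G B a"
  shows "b = b'"
proof -
  have "conj_set G A (b' \<otimes> inv b) = conj_set G (conj_set G A b') (inv b)"
    using conj_set_mult[OF A_subset] assms(1,2) by simp
  also have "\<dots> = A" using assms conj_set_inv[OF A_subset, of b "conj_set G B a"] by simp
  finally have "b' \<otimes> inv b = \<one>" using B_normalizing_A_trivial assms by simp
  then show ?thesis using assms(1,2) inv_equality[of "b'" "inv b"] by simp
qed

lemma partner:
  assumes "a \<in> A" "a \<noteq> \<one>"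
  shows "b_of G A B a \<in> B" "b_of G A B a \<noteq> \<one>" "conj_set G A (b_of G A B a) = conj_set G B a"
proof -
  have "\<exists>!b. b \<in> B - {\<one>} \<and> conj_set G A b = conj_set G B a"
    using partner_exists[of a] partner_unique assms by blast
  from theI'[OF this]
  show "b_of G A B a \<in> B" "b_of G A B a \<noteq> \<one>" "conj_set G A (b_of G A B a) = conj_set G B a"
    unfolding b_of_def by auto
qed

lemma partner_eqI:
  assumes "a \<in> A" "a \<noteq> \<one>" "b \<in> B" "conj_set G A b = conj_set G B a"
  shows "b_of G A B a = b"
  using partner_unique[OF partner(1)[OF assms(1,2)] assms(3)] partner(3)[OF assms(1,2)] assms(4)
  by simp

lemma conj_A_weyl:
  assumes a: "a \<in> A" "a \<noteq> \<one>"
  shows "conj_set G A (a \<otimes> inv (b_of G A B a) \<otimes> a) = B"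
proof -
  define b where "b = b_of G A B a"
  have b: "b \<in> B" using partner a b_def by simp
  have "conj_set G A (inv b) = conj_set G B (inv a)"
    using partner(3)[of "inv a"] partner_inv[of a] a b_def by simp
  then have "conj_set G A (a \<otimes> inv b \<otimes> a) = conj_set G (conj_set G B (inv a)) a"
    using conj_set_subgroup[OF A_subgroup a(1)] b a
    by (simp add: conj_set_mult A_subset conj_set_closed)
  also have "\<dots> = B" using conj_set_inv[OF B_subset, of "inv a"] a by simp
  finally show ?thesis unfolding b_def .
qed

text \<open>The braid relation a b^-1 a = b^-1 a b^-1 for b = b(a): the element
  d = a b^-1 a b a^-1 lies in B and satisfies A^d = B^(a^-1), so d = b(a^-1) = b^-1.\<close>

lemma braid:
  assumes a: "a \<in> A" "a \<noteq> \<one>"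
  shows "a \<otimes> inv (b_of G A B a) \<otimes> a = inv (b_of G A B a) \<otimes> a \<otimes> inv (b_of G A B a)"
proof -
  define b where "b = b_of G A B a"
  have b: "b \<in> B" "conj_set G A b = conj_set G B a" using partner a b_def by auto
  have "inv b \<otimes> a \<otimes> b \<in> conj_set G B a" using conj_set_memI[of a A b] b(2) a by simp
  then obtain y where y: "y \<in> B" "inv a \<otimes> y \<otimes> a = inv b \<otimes> a \<otimes> b"
    unfolding conj_set_def by auto
  define d where "d = a \<otimes> inv b \<otimes> a \<otimes> b \<otimes> inv a"
  have "d = a \<otimes> (inv b \<otimes> a \<otimes> b) \<otimes> inv a" using a b by (simp add: d_def m_assoc)
  also have "\<dots> = a \<otimes> (inv a \<otimes> y \<otimes> a) \<otimes> inv a" unfolding y(2) ..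
  also have "\<dots> = y" using a y(1) by (simp add: m_assoc)
  finally have "d \<in> B" using y by simp
  have "conj_set G A d = conj_set G (conj_set G (conj_set G A (a \<otimes> inv b \<otimes> a)) b) (inv a)"
    unfolding d_def using a b by (simp add: conj_set_mult A_subset conj_set_closed)
  also have "\<dots> = conj_set G B (inv a)"
    using conj_A_weyl[OF a] conj_set_subgroup[OF B_subgroup b(1)] b_def by simp
  finally have "b_of G A B (inv a) = d" using partner_eqI[of "inv a" d] a \<open>d \<in> B\<close> by simp
  then have "d = inv b" using partner_inv[of a] a b_def by simp
  moreover have "a \<otimes> inv b \<otimes> a = d \<otimes> a \<otimes> inv b" using a b by (simp add: d_def m_assoc)
  ultimately show ?thesis unfolding b_def by simp
qed

definition swaps :: "'a \<Rightarrow> bool" where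
  "swaps g \<longleftrightarrow> g \<in> carrier G \<and> conj_set G A g = B \<and> conj_set G B g = A"

definition torus :: "'a set" where
  "torus = normalizer G A \<inter> normalizer G B"

lemma torus_iff: "h \<in> torus \<longleftrightarrow> h \<in> carrier G \<and> conj_set G A h = A \<and> conj_set G B h = B"
  unfolding torus_def using normalizer_iff[OF A_subset] normalizer_iff[OF B_subset] by auto

lemma torus_subgroup: "subgroup torus G"
  unfolding torus_def
  using subgroups_Inter_pair normalizer_imp_subgroup A_subset B_subset by blast

lemma torus_carrier [simp]: "h \<in> torus \<Longrightarrow> h \<in> carrier G"
  unfolding torus_iff by simp

lemma torus_closed [simp]: "h \<in> torus \<Longrightarrow> h' \<in> torus \<Longrightarrow> h \<otimes> h' \<in> torus" "h \<in> torus \<Longrightarrow> inv h \<in> torus"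
  by (simp_all add: subgroup.m_closed[OF torus_subgroup] subgroup.m_inv_closed[OF torus_subgroup])

lemma swaps_carrier [simp]: "swaps g \<Longrightarrow> g \<in> carrier G"
  unfolding swaps_def by simp

lemma swaps_inv: "swaps g \<Longrightarrow> swaps (inv g)"
  unfolding swaps_def using conj_set_inv[OF A_subset] conj_set_inv[OF B_subset] by auto

lemma swaps_mult_torus: "swaps g \<Longrightarrow> swaps g' \<Longrightarrow> g \<otimes> g' \<in> torus"
  unfolding swaps_def torus_iff using conj_set_mult[OF A_subset] conj_set_mult[OF B_subset] by auto

lemma swaps_torus: "swaps g \<Longrightarrow> h \<in> torus \<Longrightarrow> swaps (g \<otimes> h)"
  unfolding swaps_def torus_iff using conj_set_mult[OF A_subset] conj_set_mult[OF B_subset] by auto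

lemma torus_conj_swaps: "swaps N \<Longrightarrow> h \<in> torus \<Longrightarrow> N \<otimes> h \<otimes> inv N \<in> torus"
  using swaps_mult_torus[OF swaps_torus swaps_inv] by blast

lemma torus_conj_A: "x \<in> A \<Longrightarrow> h \<in> torus \<Longrightarrow> inv h \<otimes> x \<otimes> h \<in> A"
  using conj_set_memI[of x A h] unfolding torus_iff by auto

lemma swaps_conj_A: "x \<in> A \<Longrightarrow> swaps g \<Longrightarrow> inv g \<otimes> x \<otimes> g \<in> B"
  using conj_set_memI[of x A g] unfolding swaps_def by auto

text \<open>The products A H A normalize A, so they never interchange A and B.\<close>

lemma swaps_not_AHA:
  assumes "swaps N" "a \<in> A" "h \<in> torus" "a' \<in> A"
  shows "N \<noteq> a \<otimes> h \<otimes> a'"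
proof
  assume N: "N = a \<otimes> h \<otimes> a'"
  have "conj_set G A (a \<otimes> h \<otimes> a') = A"
    using assms(2-4) conj_set_subgroup[OF A_subgroup] unfolding torus_iff
    by (simp add: conj_set_mult A_subset)
  then show False using assms(1) A_neq_B unfolding swaps_def N by simp
qed

lemma AHB_trivial:
  assumes a: "a \<in> A" and h: "h \<in> torus" and b: "b \<in> B" and eq: "a \<otimes> h \<otimes> b = \<one>"
  shows "a = \<one>" "b = \<one>"
proof -
  have "(h \<otimes> b) \<otimes> a = \<one>" using eq a h b inv_comm[of a "h \<otimes> b"] by (simp add: m_assoc)
  then have "inv a = h \<otimes> b" using inv_equality a h b by simp
  then have "conj_set G B (inv a) = B"
    using h b conj_set_subgroup[OF B_subgroup b] unfolding torus_iff
    by (simp add: conj_set_mult B_subset)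
  then show a1: "a = \<one>" using A_normalizing_B_trivial[of "inv a"] a by simp
  then have "inv b = h" using eq inv_equality[of h b] h b by simp
  then have "conj_set G A (inv b) = A" using h unfolding torus_iff by simp
  then show "b = \<one>" using B_normalizing_A_trivial[of "inv b"] b by simp
qed

lemma swap_fixed:
  assumes N: "swaps N" and a: "a \<in> A" "a' \<in> A" and h: "h \<in> torus"
    and eq: "a \<otimes> h \<otimes> N \<otimes> a' = N"
  shows "a = \<one>" "a' = \<one>"
proof -
  define z where "z = N \<otimes> a' \<otimes> inv N"
  have z: "z \<in> B" unfolding z_def using swaps_conj_A[OF a(2) swaps_inv[OF N]] N by simp
  have "a \<otimes> h \<otimes> z = (a \<otimes> h \<otimes> N \<otimes> a') \<otimes> inv N"
    unfolding z_def using N a h by (simp add: m_assoc)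
  then have "a \<otimes> h \<otimes> z = \<one>" using eq N by simp
  then show "a = \<one>" using AHB_trivial[OF a(1) h z] by auto
  have "a' = inv N \<otimes> z \<otimes> N" unfolding z_def using N a by (simp add: m_assoc)
  then show "a' = \<one>" using AHB_trivial[OF a(1) h z] \<open>a \<otimes> h \<otimes> z = \<one>\<close> N by simp
qed

definition weyl :: "'a \<Rightarrow> 'a" where
  "weyl a = a \<otimes> inv (b_of G A B a) \<otimes> a"

lemma weyl_swaps: assumes a: "a \<in> A" "a \<noteq> \<one>" shows "swaps (weyl a)"
proof -
  define b where "b = b_of G A B a"
  have b: "b \<in> B" "conj_set G A b = conj_set G B a" using partner a b_def by auto
  have "conj_set G B (a \<otimes> inv b) = A"
    using b a conj_set_inv[OF A_subset b(1)[THEN B_carrier] b(2)]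
    by (simp add: conj_set_mult B_subset)
  then have "conj_set G B (weyl a) = A"
    unfolding weyl_def b_def[symmetric] using a b conj_set_subgroup[OF A_subgroup a(1)]
    by (simp add: conj_set_mult B_subset)
  then show ?thesis unfolding swaps_def using conj_A_weyl[OF a] a partner(1)[OF a]
    by (simp add: weyl_def)
qed

text \<open>From the braid relation: n(a)^-1 a n(a) = b(a)^-1 = a^-1 n(a) a^-1.\<close>

lemma weyl_relation:
  assumes a: "a \<in> A" "a \<noteq> \<one>"
  shows "inv (weyl a) \<otimes> a \<otimes> weyl a = inv a \<otimes> weyl a \<otimes> inv a"
proof -
  define b where "b = b_of G A B a"
  have b: "b \<in> carrier G" using partner a b_def by simp
  have n: "weyl a = a \<otimes> inv b \<otimes> a" and nc: "weyl a \<in> carrier G"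
    using a b unfolding weyl_def b_def by simp_all
  have "weyl a \<otimes> inv b = a \<otimes> (inv b \<otimes> a \<otimes> inv b)" using n a b by (simp add: m_assoc)
  also have "\<dots> = a \<otimes> weyl a" using braid[OF a] n b_def by simp
  finally have "a \<otimes> weyl a = weyl a \<otimes> inv b" by simp
  then have "inv (weyl a) \<otimes> a \<otimes> weyl a = inv b" using nc a b by (simp add: m_assoc)
  also have "\<dots> = inv a \<otimes> weyl a \<otimes> inv a" using n a b by (simp add: m_assoc)
  finally show ?thesis .
qed

definition K :: "'a set" where
  "K = comm_subgroup G A torus"

lemma commutators_in_A: "{comm_elem G a h | a h. a \<in> A \<and> h \<in> torus} \<subseteq> A"
proof
  fix z assume "z \<in> {comm_elem G a h | a h. a \<in> A \<and> h \<in> torus}"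
  then obtain a h where z: "z = comm_elem G a h" "a \<in> A" "h \<in> torus" by blast
  then have "z = inv a \<otimes> (inv h \<otimes> a \<otimes> h)" by (simp add: comm_elem_def m_assoc)
  then show "z \<in> A" using torus_conj_A z by simp
qed

lemma K_subgroup: "subgroup K G"
  unfolding K_def comm_subgroup_def using generate_is_subgroup commutators_in_A A_subset by blast

lemma K_subset_A: "K \<subseteq> A"
  unfolding K_def comm_subgroup_def using generate_subgroup_incl[OF commutators_in_A A_subgroup] .

lemma K_closed: "x \<in> K \<Longrightarrow> y \<in> K \<Longrightarrow> x \<otimes> y \<in> K" "x \<in> K \<Longrightarrow> inv x \<in> K" "\<one> \<in> K"
  by (simp_all add: subgroup.m_closed[OF K_subgroup] subgroup.m_inv_closed[OF K_subgroup]
      subgroup.one_closed[OF K_subgroup])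

lemma commutator_in_K: assumes "x \<in> A" "h \<in> torus" shows "inv x \<otimes> (inv h \<otimes> x \<otimes> h) \<in> K"
proof -
  have "inv x \<otimes> (inv h \<otimes> x \<otimes> h) = comm_elem G x h"
    using assms by (simp add: comm_elem_def m_assoc)
  moreover have "comm_elem G x h \<in> generate G {comm_elem G a h | a h. a \<in> A \<and> h \<in> torus}"
    by (rule generate.incl) (use assms in blast)
  ultimately show ?thesis unfolding K_def comm_subgroup_def by simp
qed

definition congK :: "'a \<Rightarrow> 'a \<Rightarrow> bool" where
  "congK x y \<longleftrightarrow> x \<in> A \<and> y \<in> A \<and> inv x \<otimes> y \<in> K"

lemma congK_A: "congK x y \<Longrightarrow> x \<in> A" "congK x y \<Longrightarrow> y \<in> A"
  unfolding congK_def by simp_all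

lemma congK_refl: "x \<in> A \<Longrightarrow> congK x x"
  unfolding congK_def using K_closed by simp

lemma congK_trans: "congK x y \<Longrightarrow> congK y z \<Longrightarrow> congK x z"
  unfolding congK_def using K_closed(1)[of "inv x \<otimes> y" "inv y \<otimes> z"] by (simp add: m_assoc)

lemma congK_mult: assumes "congK x y" "congK x' y'" shows "congK (x \<otimes> x') (y \<otimes> y')"
proof -
  have h: "x \<in> A" "y \<in> A" "x' \<in> A" "y' \<in> A" "(inv x \<otimes> y) \<otimes> (inv x' \<otimes> y') \<in> K"
    using assms K_closed unfolding congK_def by auto
  have "inv (x \<otimes> x') \<otimes> (y \<otimes> y') = inv x' \<otimes> ((inv x \<otimes> y) \<otimes> y')"
    using h by (simp add: inv_mult_group m_assoc)
  also have "\<dots> = (inv x \<otimes> y) \<otimes> (inv x' \<otimes> y')"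
    using h A_comm[of "inv x'" "inv x \<otimes> y"] by (simp add: m_assoc[symmetric])
  finally show ?thesis using h unfolding congK_def by simp
qed

lemma congK_inv: assumes "congK x y" shows "congK (inv x) (inv y)"
proof -
  have h: "x \<in> A" "y \<in> A" "inv (inv x \<otimes> y) \<in> K" using assms K_closed unfolding congK_def by auto
  have "inv (inv x \<otimes> y) = inv (inv x) \<otimes> inv y"
    using h A_comm[of "inv y" x] by (simp add: inv_mult_group)
  then show ?thesis using h unfolding congK_def by simp
qed

lemma congK_conj: "x \<in> A \<Longrightarrow> h \<in> torus \<Longrightarrow> congK x (inv h \<otimes> x \<otimes> h)"
  unfolding congK_def using commutator_in_K torus_conj_A by auto

lemma congK_one: assumes "congK x \<one>" shows "x \<in> K"
proof -
  have "x \<in> A" "inv x \<in> K" using assms unfolding congK_def by auto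
  then show ?thesis using K_closed(2)[of "inv x"] by simp
qed

text \<open>Step (3): conjugation of 1 \<noteq> x \<in> A by any element interchanging A and B,
  obtained by transporting the relation of n(x) along the torus element n(x)^-1 N.\<close>

lemma swap_conj_normal_form:
  assumes N: "swaps N" and x: "x \<in> A" "x \<noteq> \<one>"
  obtains x' h where "congK x x'" "h \<in> torus" "inv N \<otimes> x \<otimes> N = inv x' \<otimes> h \<otimes> N \<otimes> inv x'"
proof -
  define m where "m = weyl x"
  have m: "swaps m" unfolding m_def using weyl_swaps[OF x] .
  have rel: "inv m \<otimes> x \<otimes> m = inv x \<otimes> m \<otimes> inv x" unfolding m_def using weyl_relation[OF x] .
  define g where "g = inv m \<otimes> N"
  have "g \<in> torus" unfolding g_def using swaps_mult_torus[OF swaps_inv[OF m] N] .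
  define x' where "x' = inv g \<otimes> x \<otimes> g"
  have "congK x x'" unfolding x'_def using congK_conj[OF x(1) \<open>g \<in> torus\<close>] .
  moreover have "inv N \<otimes> m \<in> torus" using swaps_mult_torus[OF swaps_inv[OF N] m] .
  moreover have "inv N \<otimes> x \<otimes> N = inv x' \<otimes> (inv N \<otimes> m) \<otimes> N \<otimes> inv x'"
    unfolding x'_def g_def
    by (rule conj_relation_transfer[OF swaps_carrier[OF N] swaps_carrier[OF m] A_carrier[OF x(1)] rel])
  ultimately show ?thesis by (rule that)
qed

text \<open>Step (4a): n(cd) = cd (n^-1 c n)(n^-1 d n) cd, expanded by step (3) for c and d.\<close>

lemma weyl_expansion:
  assumes c: "c \<in> A" "c \<noteq> \<one>" and d: "d \<in> A" "d \<noteq> \<one>" and cd: "c \<otimes> d \<noteq> \<one>"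
  defines "N \<equiv> weyl (c \<otimes> d)"
  obtains u g e v where "N = u \<otimes> g \<otimes> N \<otimes> e \<otimes> N \<otimes> v" "g \<in> torus"
    "congK d u" "congK (inv (c \<otimes> d)) e" "congK c v"
proof -
  have N: "swaps N" unfolding N_def using weyl_swaps c d cd by simp
  have R: "inv N \<otimes> (c \<otimes> d) \<otimes> N = inv (c \<otimes> d) \<otimes> N \<otimes> inv (c \<otimes> d)"
    unfolding N_def using weyl_relation c d cd by simp
  obtain c' hc where Dc: "congK c c'" "hc \<in> torus" "inv N \<otimes> c \<otimes> N = inv c' \<otimes> hc \<otimes> N \<otimes> inv c'"
    using swap_conj_normal_form[OF N c] .
  obtain d' hd where Dd: "congK d d'" "hd \<in> torus" "inv N \<otimes> d \<otimes> N = inv d' \<otimes> hd \<otimes> N \<otimes> inv d'"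
    using swap_conj_normal_form[OF N d] .
  have c'd': "c' \<in> A" "d' \<in> A" using Dc(1) Dd(1) congK_A by auto
  define u where "u = c \<otimes> d \<otimes> inv c'"
  define g where "g = hc \<otimes> (N \<otimes> hd \<otimes> inv N)"
  define e where "e = inv hd \<otimes> (inv c' \<otimes> inv d') \<otimes> hd"
  define v where "v = inv d' \<otimes> c \<otimes> d"
  have "(c \<otimes> d) \<otimes> (inv N \<otimes> (c \<otimes> d) \<otimes> N) \<otimes> (c \<otimes> d) = N"
    unfolding R using c d N by (simp add: m_assoc)
  then have "N = (c \<otimes> d) \<otimes> ((inv N \<otimes> c \<otimes> N) \<otimes> (inv N \<otimes> d \<otimes> N)) \<otimes> (c \<otimes> d)"
    using c d N by (simp add: m_assoc)
  also have "\<dots> = (c \<otimes> d) \<otimes> ((inv c' \<otimes> hc \<otimes> N \<otimes> inv c') \<otimes> (inv d' \<otimes> hd \<otimes> N \<otimes> inv d')) \<otimes> (c \<otimes> d)"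
    by (simp only: Dc(3) Dd(3))
  also have "\<dots> = u \<otimes> g \<otimes> N \<otimes> e \<otimes> N \<otimes> v"
    unfolding u_def g_def e_def v_def using c d N c'd' Dc(2) Dd(2) by (simp add: m_assoc)
  finally have expansion: "N = u \<otimes> g \<otimes> N \<otimes> e \<otimes> N \<otimes> v" .
  have "g \<in> torus" unfolding g_def using torus_conj_swaps[OF N Dd(2)] Dc(2) by simp
  have "congK (c \<otimes> d \<otimes> inv c) u"
    unfolding u_def using congK_mult[OF congK_refl congK_inv[OF Dc(1)]] c d by simp
  moreover have "c \<otimes> d \<otimes> inv c = d" using A_comm[OF c(1) d(1)] c d by (simp add: m_assoc)
  ultimately have "congK d u" by simp
  have "congK (inv c \<otimes> inv d) e"
    unfolding e_def using congK_trans[OF congK_mult[OF congK_inv[OF Dc(1)] congK_inv[OF Dd(1)]]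
        congK_conj[of "inv c' \<otimes> inv d'" hd]] c'd' Dd(2) by simp
  moreover have "inv c \<otimes> inv d = inv (c \<otimes> d)"
    using A_comm[of "inv c" "inv d"] c d by (simp add: inv_mult_group)
  ultimately have "congK (inv (c \<otimes> d)) e" by simp
  have "congK (inv d \<otimes> c \<otimes> d) v"
    unfolding v_def using congK_mult[OF congK_mult[OF congK_inv[OF Dd(1)] congK_refl] congK_refl] c d
    by simp
  moreover have "inv d \<otimes> c \<otimes> d = c" using A_comm[OF c(1) d(1)] c d by (simp add: m_assoc)
  ultimately have "congK c v" by simp
  show ?thesis by (rule that) fact+
qed

lemma swap_word_shorten:
  assumes N: "swaps N" and g: "g \<in> torus" and e: "e \<in> A" "e \<noteq> \<one>"
  obtains f g' e' where "g \<otimes> N \<otimes> e \<otimes> N = f \<otimes> g' \<otimes> N \<otimes> e'" "g' \<in> torus"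
    "congK (inv e) f" "congK (inv e) e'"
proof -
  obtain e0 h where De: "congK e e0" "h \<in> torus" "inv N \<otimes> e \<otimes> N = inv e0 \<otimes> h \<otimes> N \<otimes> inv e0"
    using swap_conj_normal_form[OF N e] .
  have e0: "e0 \<in> A" using De(1) congK_A by simp
  define t where "t = g \<otimes> (N \<otimes> N)"
  have t: "t \<in> torus" unfolding t_def using swaps_mult_torus[OF N N] g by simp
  define f where "f = t \<otimes> inv e0 \<otimes> inv t"
  have "g \<otimes> N \<otimes> e \<otimes> N = t \<otimes> (inv N \<otimes> e \<otimes> N)"
    unfolding t_def using g N e by (simp add: m_assoc)
  also have "\<dots> = t \<otimes> (inv e0 \<otimes> h \<otimes> N \<otimes> inv e0)" by (simp only: De(3))
  also have "\<dots> = f \<otimes> (t \<otimes> h) \<otimes> N \<otimes> inv e0"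
    unfolding f_def using t e0 De(2) N by (simp add: m_assoc)
  finally have word: "g \<otimes> N \<otimes> e \<otimes> N = f \<otimes> (t \<otimes> h) \<otimes> N \<otimes> inv e0" .
  have "congK (inv e) (inv e0)" using congK_inv[OF De(1)] .
  moreover have "congK (inv e0) f"
    unfolding f_def using congK_conj[of "inv e0" "inv t"] e0 t by simp
  ultimately have "congK (inv e) f" using congK_trans by blast
  then show ?thesis using that word t De(2) \<open>congK (inv e) (inv e0)\<close> by simp
qed

lemma key_congruences:
  assumes c: "c \<in> A" "c \<noteq> \<one>" and d: "d \<in> A" "d \<noteq> \<one>" and cd: "c \<otimes> d \<noteq> \<one>"
  shows "c \<otimes> d \<otimes> d \<in> K" "c \<otimes> c \<otimes> d \<in> K"
proof -
  define N where "N = weyl (c \<otimes> d)"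
  have N: "swaps N" unfolding N_def using weyl_swaps c d cd by simp
  obtain u g e v where exp: "N = u \<otimes> g \<otimes> N \<otimes> e \<otimes> N \<otimes> v" and g: "g \<in> torus"
    and u: "congK d u" and e: "congK (inv (c \<otimes> d)) e" and v: "congK c v"
    using weyl_expansion[OF c d cd, folded N_def] .
  have A: "u \<in> A" "e \<in> A" "v \<in> A" using u e v congK_A by auto
  text \<open>If e = 1, then N would lie in A H A and hence normalize A.\<close>
  have "e \<noteq> \<one>"
  proof
    assume "e = \<one>"
    then have "N = u \<otimes> (g \<otimes> (N \<otimes> N)) \<otimes> v" using exp A g N by (simp add: m_assoc)
    moreover have "g \<otimes> (N \<otimes> N) \<in> torus" using swaps_mult_torus[OF N N] g by simp
    ultimately show False using swaps_not_AHA[OF N] A by blast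
  qed
  obtain f g' e' where sh: "g \<otimes> N \<otimes> e \<otimes> N = f \<otimes> g' \<otimes> N \<otimes> e'" and g': "g' \<in> torus"
    and f: "congK (inv e) f" and e': "congK (inv e) e'"
    using swap_word_shorten[OF N g A(2) \<open>e \<noteq> \<one>\<close>] .
  have fe': "f \<in> A" "e' \<in> A" using f e' congK_A by auto
  have "N = u \<otimes> (g \<otimes> N \<otimes> e \<otimes> N) \<otimes> v" using exp A g N by (simp add: m_assoc)
  also have "\<dots> = (u \<otimes> f) \<otimes> g' \<otimes> N \<otimes> (e' \<otimes> v)" unfolding sh using A fe' g' N by (simp add: m_assoc)
  finally have "u \<otimes> f = \<one>" "e' \<otimes> v = \<one>" using swap_fixed[OF N _ _ g', of "u \<otimes> f" "e' \<otimes> v"] A fe' by auto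
  have ecd: "congK (c \<otimes> d) (inv e)" using congK_inv[OF e] c d by simp
  have "congK (d \<otimes> (c \<otimes> d)) (u \<otimes> f)" using congK_mult[OF u congK_trans[OF ecd f]] .
  moreover have "d \<otimes> (c \<otimes> d) = c \<otimes> d \<otimes> d"
    using A_comm[OF d(1) c(1)] c d by (simp add: m_assoc[symmetric])
  ultimately show "c \<otimes> d \<otimes> d \<in> K" using congK_one \<open>u \<otimes> f = \<one>\<close> by simp
  have "congK (c \<otimes> d \<otimes> c) (e' \<otimes> v)" using congK_mult[OF congK_trans[OF ecd e'] v] .
  moreover have "c \<otimes> d \<otimes> c = c \<otimes> c \<otimes> d" using A_comm[OF d(1) c(1)] c d by (simp add: m_assoc)
  ultimately show "c \<otimes> c \<otimes> d \<in> K" using congK_one \<open>e' \<otimes> v = \<one>\<close> by simp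
qed

text \<open>Step (5): t = ((tw) w^2)^-1 ((tw)^2 w) lies in K whenever w, tw, tw^2 \<noteq> 1.\<close>

lemma in_K_by_witness:
  assumes t: "t \<in> A" and w: "w \<in> A" "w \<noteq> \<one>" and tw: "t \<otimes> w \<noteq> \<one>" "t \<otimes> w \<otimes> w \<noteq> \<one>"
  shows "t \<in> K"
proof -
  have "t \<otimes> w \<otimes> w \<otimes> w \<in> K" "t \<otimes> w \<otimes> (t \<otimes> w) \<otimes> w \<in> K"
    using key_congruences[of "t \<otimes> w" w] assms by simp_all
  then have k: "inv (t \<otimes> w \<otimes> w \<otimes> w) \<otimes> (t \<otimes> w \<otimes> (t \<otimes> w) \<otimes> w) \<in> K" using K_closed by blast
  have comm: "t \<otimes> (w \<otimes> w) = w \<otimes> (w \<otimes> t)"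
    using A_comm[of t w] A_comm[of t "w \<otimes> w"] t w by (simp add: m_assoc)
  have "t \<otimes> w \<otimes> (t \<otimes> w) \<otimes> w = t \<otimes> (w \<otimes> (t \<otimes> (w \<otimes> w)))" using t w by (simp add: m_assoc)
  also have "\<dots> = (t \<otimes> w \<otimes> w \<otimes> w) \<otimes> t" unfolding comm using t w by (simp add: m_assoc)
  finally show ?thesis using k t w by simp
qed

lemma A_subset_K:
  assumes big: "infinite A \<or> card A \<ge> 4" and x: "x \<in> A"
  shows "x \<in> K"
proof (cases "x = \<one>")
  case True
  then show ?thesis using K_closed by simp
next
  case False
  obtain w where w: "w \<in> A" "w \<noteq> \<one>" "w \<noteq> x" "w \<noteq> inv x"
    using exists_outside_three[OF big, of \<one> x "inv x"] by auto
  have xw: "x \<otimes> w \<noteq> \<one>" using w x inv_equality[of x w] by auto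
  have ixw: "inv x \<otimes> w \<noteq> \<one>"
  proof
    assume "inv x \<otimes> w = \<one>"
    then have "inv w = inv x" using w x inv_equality[of "inv x" w] by simp
    then show False using w x inv_inj by (metis A_carrier inv_inv)
  qed
  consider "x \<otimes> w \<otimes> w \<noteq> \<one>" | "inv x \<otimes> w \<otimes> w \<noteq> \<one>" | "x \<otimes> w \<otimes> w = \<one>" "inv x \<otimes> w \<otimes> w = \<one>"
    by blast
  then show ?thesis
  proof cases
    case 1
    then show ?thesis using in_K_by_witness[OF x w(1,2) xw] by simp
  next
    case 2
    then have "inv x \<in> K" using in_K_by_witness[of "inv x" w] x w ixw by simp
    then show ?thesis using K_closed(2)[of "inv x"] x by simp
  next
    case 3
    text \<open>Then w^2 = x, so w^3 = x w \<noteq> 1 and x = w^2 \<in> K by the witness w for w.\<close>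
    have "inv (w \<otimes> w) = inv x" using inv_equality[of "inv x" "w \<otimes> w"] 3 x w by (simp add: m_assoc)
    then have ww: "w \<otimes> w = x" using x w by (metis A_carrier inv_inv m_closed)
    have "w \<in> K" using in_K_by_witness[OF w(1) w(1,2)] ww False xw by simp
    then show ?thesis using K_closed(1)[of w w] ww by simp
  qed
qed

lemma A_eq_commutator:
  assumes "infinite A \<or> card A \<ge> 4"
  shows "A = comm_subgroup G A torus"
  using A_subset_K[OF assms] K_subset_A unfolding K_def by blast

end

theorem theorem1p1:
  fixes X :: "('a, 'b) monoid_scheme" and A B H :: "'a set"
  assumes "special_rank_one_group X A B"
    and "H = normalizer X A \<inter> normalizer X B"
    and "infinite A \<or> card A \<ge> 4"
  shows "A = comm_subgroup X A H"
proof -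
  have "group X" using assms(1) unfolding special_rank_one_group_def rank_one_group_def by simp
  then interpret special_rank_one X A B
    using assms(1) by (simp add: special_rank_one_def special_rank_one_axioms_def)
  show ?thesis using A_eq_commutator[OF assms(3)] assms(2) unfolding torus_def by simp
qed

end
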